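(* Let $r\ge 1$ and let $p_1<p_2<\cdots<p_r$ be primes such that $p_1>2$ and $p_{j+1}-p_j>r$ for all $1\le j\le r-1$. Let $\alpha_j:=p_j-j$ for $1\le j\le r$. Then the determinant of the $r\times r$ matrix whose entry in row $j$ and column $k$ ($1\le j,k\le r$) is $\dfrac{B_{\alpha_j+k-1}(1)}{\alpha_j+k-1}$ is nonzero.
   Context: $B_n(x)$ denotes the Bernoulli polynomial, defined by $\frac{ze^{xz}}{e^z-1}=\sum_{n\ge 0}B_n(x)\frac{z^n}{n!}$. *)

theory Defs
  imports "HOL-Computational_Algebra.Formal_Power_Series" "Jordan_Normal_Form.Determinant"
begin

definition bernpoly :: "nat \<Rightarrow> real \<Rightarrow> real" where
  "bernpoly n x = fact n * fps_nth (fps_X * fps_exp x / (fps_exp 1 - 1)) n"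

end

theory Submission
  imports Defs "HOL-Complex_Analysis.Complex_Analysis"
begin

hide_const (open) Finite_Cartesian_Product.vec Finite_Cartesian_Product.mat Determinants.det
hide_type (open) Finite_Cartesian_Product.vec
unbundle no vec_syntax

definition nonzero_coeffs :: "'a::zero poly \<Rightarrow> nat" where
  "nonzero_coeffs p = card {i. coeff p i \<noteq> 0}"

lemma finite_nonzero_coeffs: "finite {i. coeff p i \<noteq> 0}"
  by (rule finite_subset[of _ "{..degree p}"]) (auto intro: le_degree)

lemma nonzero_coeffs_pCons_0: "nonzero_coeffs (pCons 0 q) = nonzero_coeffs q"
proof -
  have "i \<in> {i. coeff (pCons 0 q) i \<noteq> 0} \<longleftrightarrow> i \<in> Suc ` {i. coeff q i \<noteq> 0}" for i
    by (cases i) (auto simp: coeff_pCons)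
  then have "{i. coeff (pCons 0 q) i \<noteq> 0} = Suc ` {i. coeff q i \<noteq> 0}" by blast
  thus ?thesis unfolding nonzero_coeffs_def by (simp add: card_image)
qed

lemma nonzero_coeffs_pderiv:
  fixes p :: "'a::{idom,ring_char_0} poly"
  assumes "coeff p 0 \<noteq> 0"
  shows "nonzero_coeffs p = Suc (nonzero_coeffs (pderiv p))"
proof -
  have "i \<in> {i. coeff p i \<noteq> 0} \<longleftrightarrow> i \<in> insert 0 (Suc ` {i. coeff (pderiv p) i \<noteq> 0})" for i
    using assms of_nat_neq_0[where 'a='a] by (cases i) (auto simp: coeff_pderiv)
  then have "{i. coeff p i \<noteq> 0} = insert 0 (Suc ` {i. coeff (pderiv p) i \<noteq> 0})" by blast
  moreover have "0 \<notin> Suc ` {i. coeff (pderiv p) i \<noteq> 0}" by auto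
  ultimately show ?thesis
    unfolding nonzero_coeffs_def using finite_nonzero_coeffs[of "pderiv p"] by (simp add: card_image)
qed

text \<open>Rolle's theorem applied between consecutive elements of a finite set of roots.\<close>
lemma pderiv_roots_interlace:
  fixes p :: "real poly"
  assumes "finite S" "\<forall>x\<in>S. poly p x = 0"
  shows "\<exists>Y. finite Y \<and> (\<forall>y\<in>Y. poly (pderiv p) y = 0) \<and> Y \<inter> S = {} \<and>
             card S \<le> card Y + 1 \<and> (\<forall>y\<in>Y. \<exists>a\<in>S. a < y) \<and> (\<forall>y\<in>Y. \<exists>a\<in>S. y < a)"
  using assms
proof (induction S rule: finite_linorder_max_induct)
  case empty
  then show ?case by (intro exI[of _ "{}"]) auto
next
  case (insert b A)
  then obtain Y where Y: "finite Y" "\<forall>y\<in>Y. poly (pderiv p) y = 0" "Y \<inter> A = {}"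
      "card A \<le> card Y + 1" "\<forall>y\<in>Y. \<exists>a\<in>A. a < y" "\<forall>y\<in>Y. \<exists>a\<in>A. y < a"
    by auto
  show ?case
  proof (cases "A = {}")
    case True
    then show ?thesis by (intro exI[of _ "{}"]) auto
  next
    case False
    have maxA: "Max A < b" using insert False by auto
    have maxA_in: "Max A \<in> A" using insert False by auto
    have "poly p (Max A) = 0" "poly p b = 0" using insert maxA_in by auto
    then obtain z where z: "Max A < z" "z < b" "poly (pderiv p) z = 0"
      using poly_MVT[OF maxA, of p] by auto
    have Yle: "y < Max A" if yY: "y \<in> Y" for y
    proof -
      obtain a where "a \<in> A" "y < a" using Y(6) yY by auto
      moreover have "a \<le> Max A" using \<open>a \<in> A\<close> insert(1) by auto
      ultimately show ?thesis by simp
    qed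
    have zY: "z \<notin> Y" using Yle z by force
    have zA: "z \<notin> A" using z(1) insert(1) by (meson Max_ge leD less_imp_le)
    have bY: "b \<notin> Y" using Yle maxA by force
    show ?thesis
    proof (intro exI[of _ "insert z Y"] conjI)
      show "finite (insert z Y)" using Y by auto
      show "\<forall>y\<in>insert z Y. poly (pderiv p) y = 0" using Y z by auto
      show "insert z Y \<inter> insert b A = {}"
        using zA bY Y(3) z(2) by blast
      show "card (insert b A) \<le> card (insert z Y) + 1"
        using Y zY insert by auto
      show "\<forall>y\<in>insert z Y. \<exists>a\<in>insert b A. a < y"
        using Y(5) z(1) maxA_in by blast
      show "\<forall>y\<in>insert z Y. \<exists>a\<in>insert b A. y < a"
        using Y(6) z(2) by blast
    qed
  qed
qed

text \<open>The half of Descartes' rule of signs that is needed here: a real polynomial with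
  \<open>m\<close> nonzero coefficients has fewer than \<open>m\<close> positive roots, counted with multiplicity.
  Induction on the degree: strip a factor \<open>x\<close>, or pass to the derivative, which has one
  nonzero coefficient less and, by Rolle, loses at most one positive root.\<close>
lemma sum_order_less_nonzero_coeffs:
  fixes p :: "real poly"
  assumes "p \<noteq> 0" "finite S" "S \<subseteq> {0<..}"
  shows "(\<Sum>x\<in>S. order x p) < nonzero_coeffs p"
  using assms
proof (induction "degree p" arbitrary: p S rule: less_induct)
  case less
  show ?case
  proof (cases "coeff p 0 = 0")
    case True
    obtain q where pCons_q: "p = pCons 0 q"
      using True by (metis pCons_cases coeff_pCons_0)
    then have pq: "p = [:0, 1:] * q" by simp
    have q0: "q \<noteq> 0" using less(2) pq by auto
    have "degree q < degree p" using pq q0 by (simp add: degree_mult_eq)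
    moreover have "order x p = order x q" if "x \<in> S" for x
    proof -
      have "poly [:0, 1:] x \<noteq> 0" using that less(4) by auto
      then show ?thesis using pq less(2) order_mult[of "[:0, 1:]" q x] by (simp add: order_0I)
    qed
    moreover have "nonzero_coeffs p = nonzero_coeffs q"
      using pCons_q nonzero_coeffs_pCons_0 by simp
    ultimately show ?thesis using less(1)[OF _ q0 less(3,4)] by simp
  next
    case c0: False
    show ?thesis
    proof (cases "degree p = 0")
      case True
      then obtain c where "p = [:c:]" by (rule degree_eq_zeroE)
      then have "order x p = 0" for x
        using less(2) by (intro order_0I) auto
      moreover have "0 \<in> {i. coeff p i \<noteq> 0}" using c0 by simp
      ultimately show ?thesis
        unfolding nonzero_coeffs_def using finite_nonzero_coeffs[of p] card_gt_0_iff by force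
    next
      case False
      define q where "q = pderiv p"
      have q0: "q \<noteq> 0" using False unfolding q_def by (simp add: pderiv_eq_0_iff)
      have degq: "degree q < degree p" using False unfolding q_def degree_pderiv by simp
      define S0 where "S0 = {x\<in>S. poly p x = 0}"
      have S0: "finite S0" "S0 \<subseteq> {0<..}" using less(3,4) by (auto simp: S0_def)
      obtain Y where Y: "finite Y" "\<forall>y\<in>Y. poly q y = 0" "Y \<inter> S0 = {}"
          "card S0 \<le> card Y + 1" "\<forall>y\<in>Y. \<exists>a\<in>S0. a < y"
        using pderiv_roots_interlace[OF S0(1), of p] by (auto simp: S0_def q_def)
      have "Y \<subseteq> {0<..}" using Y(5) S0(2) by force
      then have IH: "(\<Sum>x\<in>S0 \<union> Y. order x q) < nonzero_coeffs q"
        using less(1)[OF degq q0] S0 Y(1) by auto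
      have "1 \<le> order y q" if "y \<in> Y" for y
        using Y(2) q0 order_root[of q y] that by simp
      then have "card Y \<le> (\<Sum>y\<in>Y. order y q)"
        using sum_mono[of Y "\<lambda>_. 1::nat" "\<lambda>y. order y q"] by simp
      moreover have "(\<Sum>x\<in>S. order x p) = (\<Sum>x\<in>S0. order x p)"
        using less(2,3) order_root by (intro sum.mono_neutral_right) (auto simp: S0_def)
      moreover have "(\<Sum>x\<in>S0. order x p) = (\<Sum>x\<in>S0. Suc (order x q))"
        using order_pderiv[OF less(2)] by (simp add: S0_def q_def)
      moreover have "(\<Sum>x\<in>S0. Suc (order x q)) = (\<Sum>x\<in>S0. order x q) + card S0"
        by (simp add: sum_Suc)
      moreover have "(\<Sum>x\<in>S0 \<union> Y. order x q) = (\<Sum>x\<in>S0. order x q) + (\<Sum>y\<in>Y. order y q)"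
        using S0(1) Y(1,3) by (simp add: sum.union_disjoint Int_commute)
      ultimately show ?thesis
        using IH Y(4) nonzero_coeffs_pderiv[OF c0] unfolding q_def by simp
    qed
  qed
qed

lemma poly_sign_on_pos_reals:
  fixes p :: "real poly"
  assumes "\<forall>x>0. poly p x \<noteq> 0"
  shows "(\<forall>x>0. poly p x > 0) \<or> (\<forall>x>0. poly p x < 0)"
proof (rule ccontr)
  assume "\<not> ?thesis"
  then obtain x y where xy: "x > 0" "y > 0" "poly p x \<le> 0" "poly p y \<ge> 0" by force
  hence xy': "poly p x < 0" "poly p y > 0" using assms by force+
  consider "x < y" | "y < x" | "x = y" by linarith
  thus False
  proof cases
    case 1
    then obtain z where "z > x" "z < y" "poly p z = 0" using poly_IVT_pos[OF 1 xy'] by auto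
    thus False using assms xy by force
  next
    case 2
    then obtain z where "z > y" "z < x" "poly p z = 0" using poly_IVT_neg[OF 2 xy'(2) xy'(1)] by auto
    thus False using assms xy by force
  next
    case 3
    thus False using xy' by simp
  qed
qed

lemma poly_sign_on_pos_reals_even_order:
  fixes p :: "real poly"
  assumes "p \<noteq> 0" "\<forall>x>0. even (order x p)"
  shows "(\<forall>x>0. poly p x \<ge> 0) \<or> (\<forall>x>0. poly p x \<le> 0)"
  using assms
proof (induction "degree p" arbitrary: p rule: less_induct)
  case less
  show ?case
  proof (cases "\<exists>x>0. poly p x = 0")
    case False
    then show ?thesis using poly_sign_on_pos_reals[of p] by force
  next
    case True
    then obtain x where x: "x > 0" "poly p x = 0" by auto
    have "order x p \<noteq> 0" using x less(2) order_root by blast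
    moreover have "even (order x p)" using less(3) x by auto
    ultimately have "2 \<le> order x p" by presburger
    hence "[:-x, 1:] ^ 2 dvd p" using order_divides by blast
    then obtain q where pq: "p = [:-x, 1:] ^ 2 * q" by (elim dvdE)
    have q0: "q \<noteq> 0" using pq less(2) by auto
    have "degree p = degree ([:-x, 1:] ^ 2) + degree q"
      using pq q0 by (simp add: degree_mult_eq)
    also have "degree ([:-x, 1:] ^ 2) = 2" by (simp add: degree_power_eq)
    finally have degq: "degree q < degree p" by simp
    have ordq: "even (order y q)" if "y > 0" for y
    proof -
      have "order y p = order y ([:-x, 1:] ^ 2) + order y q"
        using pq less(2) order_mult by metis
      moreover have "order y ([:-x, 1:] ^ 2) = (if y = x then 2 else 0)"
      proof (cases "y = x")
        case True
        then show ?thesis using order_power_n_n[of x 2] by simp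
      next
        case False
        then have "poly ([:-x, 1:] ^ 2) y \<noteq> 0" by simp
        then show ?thesis using False by (simp add: order_0I)
      qed
      moreover have "even (order y p)" using less(3) that by blast
      ultimately show ?thesis by (cases "y = x") auto
    qed
    have IH: "(\<forall>x>0. poly q x \<ge> 0) \<or> (\<forall>x>0. poly q x \<le> 0)"
      using less(1)[OF degq q0] ordq by blast
    have pv: "poly p y = (y - x)^2 * poly q y" for y using pq by simp
    show ?thesis
    proof (cases "\<forall>x>0. poly q x \<ge> 0")
      case True
      then show ?thesis using pv by (auto intro!: mult_nonneg_nonneg)
    next
      case False
      then have "\<forall>x>0. poly q x \<le> 0" using IH by blast
      then show ?thesis using pv by (auto intro!: mult_nonneg_nonpos)
    qed
  qed
qed

lemma order_sparse_poly_vanishing: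
  fixes p :: "real poly"
  assumes "p \<noteq> 0" "finite R" "R \<subseteq> {0<..}" "\<forall>t\<in>R. poly p t = 0"
    and "nonzero_coeffs p \<le> card R + 1" "x > 0"
  shows "order x p = (if x \<in> R then 1 else 0)"
proof -
  have pos: "order t p \<ge> 1" if "t \<in> R" for t
    using assms(1,4) that order_root[of p t] by simp
  have "insert x R \<subseteq> {0<..}" using assms(3,6) by simp
  then have "(\<Sum>t\<in>insert x R. order t p) < card R + 1"
    using sum_order_less_nonzero_coeffs[OF assms(1)] assms(2,5) by (meson finite_insert order_less_le_trans)
  moreover have "(\<Sum>t\<in>insert x R. order t p) = order x p + (\<Sum>t\<in>R - {x}. order t p)"
    using assms(2) by (simp add: sum.insert_remove)
  moreover have "card (R - {x}) \<le> (\<Sum>t\<in>R - {x}. order t p)"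
    using pos sum_mono[of "R - {x}" "\<lambda>_. 1::nat" "\<lambda>t. order t p"] by simp
  ultimately have "order x p + card (R - {x}) \<le> card R" by linarith
  then show ?thesis
  proof (cases "x \<in> R")
    case True
    then have "card R = Suc (card (R - {x}))" using card_Suc_Diff1[OF assms(2)] by simp
    then show ?thesis using True pos[OF True] \<open>order x p + card (R - {x}) \<le> card R\<close> by simp
  qed simp
qed

lemma exists_sparse_poly_vanishing:
  fixes R :: "'a::field set"
  assumes "finite E" "finite R" "card R < card E"
  shows "\<exists>p. p \<noteq> 0 \<and> (\<forall>i. coeff p i \<noteq> 0 \<longrightarrow> i \<in> E) \<and> (\<forall>t\<in>R. poly p t = 0)"
proof -
  define n where "n = card E"
  obtain es where es: "distinct es" "set es = E"
    using finite_distinct_list[OF assms(1)] by blast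
  then have es_len: "length es = n" unfolding n_def using distinct_card by fastforce
  obtain rs where rs: "distinct rs" "set rs = R"
    using finite_distinct_list[OF assms(2)] by blast
  then have rs_len: "length rs = card R" using distinct_card by fastforce
  define c where "c i = vec n (\<lambda>j. (rs ! i) ^ (es ! j))" for i
  define M where "M = mat\<^sub>r n n (\<lambda>i. if i = n - 1 then 0\<^sub>v n else c i)"
  have "det M = 0"
    unfolding M_def using assms(3) n_def by (intro Determinant.det_row_0) (auto simp: c_def)
  moreover have "M \<in> carrier_mat n n" unfolding M_def by simp
  ultimately obtain v where v: "v \<in> carrier_vec n" "v \<noteq> 0\<^sub>v n" "M *\<^sub>v v = 0\<^sub>v n"
    using det_0_iff_vec_prod_zero_field by blast
  define p where "p = (\<Sum>j<n. monom (v $ j) (es ! j))"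
  have coeff_p: "coeff p (es ! j) = v $ j" if "j < n" for j
  proof -
    have "coeff p (es ! j) = (\<Sum>k<n. if k = j then v $ k else 0)"
      unfolding p_def coeff_sum coeff_monom using that es(1) es_len
      by (intro sum.cong) (auto simp: nth_eq_iff_index_eq)
    then show ?thesis using that by simp
  qed
  have "coeff p i = 0" if "i \<notin> E" for i
  proof -
    have "es ! j \<noteq> i" if "j < n" for j
      using that \<open>i \<notin> E\<close> es(2) es_len nth_mem by blast
    then show ?thesis unfolding p_def coeff_sum coeff_monom by (intro sum.neutral) simp
  qed
  moreover have "\<exists>j<n. v $ j \<noteq> 0"
  proof (rule ccontr)
    assume "\<not> (\<exists>j<n. v $ j \<noteq> 0)"
    then have "v = 0\<^sub>v n" using v(1) by (intro eq_vecI) auto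
    then show False using v(2) by simp
  qed
  then obtain j where "j < n" "v $ j \<noteq> 0" by blast
  then have "coeff p (es ! j) \<noteq> 0" using coeff_p by simp
  then have "p \<noteq> 0" by auto
  moreover have "poly p t = 0" if "t \<in> R" for t
  proof -
    have "t \<in> set rs" using that rs(2) by simp
    then obtain i where i: "i < length rs" "rs ! i = t" by (auto simp: in_set_conv_nth)
    then have "i < n - 1" using assms(3) n_def rs_len by simp
    then have "(M *\<^sub>v v) $ i = 0" using v(3) by simp
    moreover have "(M *\<^sub>v v) $ i = (\<Sum>j<n. v $ j * t ^ (es ! j))"
      using \<open>i < n - 1\<close> v(1) i(2)
      by (simp add: M_def c_def scalar_prod_def lessThan_atLeast0 mult.commute)
    moreover have "poly p t = (\<Sum>j<n. v $ j * t ^ (es ! j))"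
      by (simp add: p_def poly_sum poly_monom)
    ultimately show ?thesis by simp
  qed
  ultimately show ?thesis by blast
qed

text \<open>A polynomial \<open>H\<close> with exponents in \<open>E\<close> can change sign exactly at the positive roots of
  odd order of \<open>G\<close>: there are fewer than \<open>card E\<close> of them by Descartes' bound, and by that
  bound again a suitable \<open>H\<close> has no further positive roots and only simple ones there.\<close>
lemma exists_sparse_sign_partner:
  fixes G :: "real poly"
  assumes "G \<noteq> 0" "finite E" "nonzero_coeffs G \<le> card E"
  shows "\<exists>H. H \<noteq> 0 \<and> (\<forall>i. coeff H i \<noteq> 0 \<longrightarrow> i \<in> E) \<and> (\<forall>x>0. 0 \<le> poly (H * G) x)"
proof -
  define R where "R = {x. 0 < x \<and> odd (order x G)}"
  have R_roots: "poly G x = 0" if "x \<in> R" for x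
    using that order_root[of G x] by (auto simp: R_def)
  have "R \<subseteq> {x. poly G x = 0}" using R_roots by blast
  then have R: "finite R" "R \<subseteq> {0<..}"
    using finite_subset poly_roots_finite[OF assms(1)] by (auto simp: R_def)
  have "1 \<le> order x G" if "x \<in> R" for x
    using that odd_pos by (fastforce simp: R_def)
  then have "card R \<le> (\<Sum>x\<in>R. order x G)"
    using sum_mono[of R "\<lambda>_. 1::nat" "\<lambda>x. order x G"] by simp
  also have "\<dots> < card E"
    using sum_order_less_nonzero_coeffs[OF assms(1) R] assms(3) by simp
  finally obtain E' where E': "E' \<subseteq> E" "card E' = card R + 1" "finite E'"
    using obtain_subset_with_card_n[of "card R + 1" E] by force
  obtain H where H: "H \<noteq> 0" "\<forall>i. coeff H i \<noteq> 0 \<longrightarrow> i \<in> E'" "\<forall>t\<in>R. poly H t = 0"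
    using exists_sparse_poly_vanishing[OF E'(3) R(1)] E'(2) by auto
  have "nonzero_coeffs H \<le> card R + 1"
    unfolding nonzero_coeffs_def using H(2) E' card_mono[OF E'(3), of "{i. coeff H i \<noteq> 0}"] by auto
  then have order_H: "order x H = (if x \<in> R then 1 else 0)" if "x > 0" for x
    using order_sparse_poly_vanishing[OF H(1) R H(3)] that by blast
  have "even (order x (H * G))" if "x > 0" for x
    using that order_mult[of H G x] H(1) assms(1) order_H[OF that] by (auto simp: R_def)
  then consider "\<forall>x>0. poly (H * G) x \<ge> 0" | "\<forall>x>0. poly (-H * G) x \<ge> 0"
    using poly_sign_on_pos_reals_even_order[of "H * G"] H(1) assms(1) by auto
  then show ?thesis
  proof cases
    case 1
    then show ?thesis using H(1,2) E'(1) by blast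
  next
    case 2
    then show ?thesis using H(1,2) E'(1) by (intro exI[of _ "-H"]) auto
  qed
qed

text \<open>Junk for \<open>s \<le> 1\<close>, where the series diverges.\<close>
definition zeta :: "nat \<Rightarrow> real" where
  "zeta s = (\<Sum>k. inverse ((1 + real k) ^ s))"

lemma sums_zeta: "2 \<le> s \<Longrightarrow> (\<lambda>k. inverse ((1 + real k) ^ s)) sums zeta s"
  using Polygamma_converges'[of "1::real" s] by (simp add: zeta_def summable_sums)

lemma has_integral_scaled_power_exp:
  fixes l :: real
  assumes "l > 0"
  shows "((\<lambda>t. (t / l) ^ N / exp t) has_integral (fact N / l ^ N)) {0..}"
proof -
  have "((\<lambda>t::real. t powr real N / exp t) has_integral fact N) {0..}"
    using Gamma_integral_real[of "real N + 1"] Gamma_fact[of N, where 'a=real]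
    by (simp add: add.commute)
  moreover have "((\<lambda>t::real. t ^ N / exp t) has_integral fact N) {0..} \<longleftrightarrow>
      ((\<lambda>t. t powr real N / exp t) has_integral fact N) {0..}"
    by (rule has_integral_spike_finite_eq[of "{0}"]) (auto simp: powr_realpow)
  ultimately have "((\<lambda>t::real. t ^ N / exp t * (1 / l ^ N)) has_integral (fact N * (1 / l ^ N))) {0..}"
    by (intro has_integral_mult_left) simp
  then show ?thesis by (simp add: power_divide mult.commute)
qed

lemma has_integral_Ici_pos:
  fixes f :: "real \<Rightarrow> real"
  assumes "(f has_integral I) {0..}" "\<And>t. t \<ge> 0 \<Longrightarrow> f t \<ge> 0"
    and "isCont f x0" "x0 > 0" "f x0 > 0"
  shows "I > 0"
proof -
  have "eventually (\<lambda>t. f x0 / 2 < f t) (at x0)"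
    using assms(3,5) by (intro order_tendstoD) (auto simp: isCont_def)
  then obtain d where d: "d > 0" "\<And>t. t \<noteq> x0 \<Longrightarrow> dist t x0 < d \<Longrightarrow> f x0 / 2 < f t"
    unfolding eventually_at by auto
  define e where "e = min d x0 / 2"
  have e: "e > 0" "e < d" "{x0..x0 + e} \<subseteq> {0..}" using d assms(4) by (auto simp: e_def)
  have lower: "f x0 / 2 \<le> f t" if "t \<in> {x0..x0 + e}" for t
    using that d(2)[of t] e assms(5) by (cases "t = x0") (auto simp: dist_real_def)
  define g where "g t = (if t \<in> {x0..x0 + e} then f x0 / 2 else 0)" for t
  have "((\<lambda>t. f x0 / 2) has_integral (f x0 / 2 * e)) {x0..x0 + e}"
    using has_integral_const_real[of "f x0 / 2" x0 "x0 + e"] e by (simp add: mult.commute)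
  then have "(g has_integral (f x0 / 2 * e)) {0..}"
    unfolding g_def by (subst has_integral_restrict[OF e(3)])
  then have "f x0 / 2 * e \<le> I"
    by (rule has_integral_le[OF _ assms(1)]) (use lower assms(2) in \<open>auto simp: g_def\<close>)
  moreover have "f x0 / 2 * e > 0" using assms(5) e by simp
  ultimately show ?thesis by simp
qed

text \<open>The sum is \<open>\<integral>\<^sub>0\<^sup>\<infinity> P t / (e\<^sup>t - 1) dt\<close> for \<open>P x = \<Sum>\<^sub>j c\<^sub>j x\<^bsup>e\<^sub>j\<^esup>\<close>; expanding
  \<open>1 / (e\<^sup>t - 1) = \<Sum>\<^sub>k e\<^bsup>-(k+1)t\<^esup>\<close> writes it as a series of Laplace integrals of \<open>P \<ge> 0\<close>.\<close>
lemma zeta_moments_pos: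
  fixes c :: "'i \<Rightarrow> real" and e :: "'i \<Rightarrow> nat"
  assumes "finite J" "\<And>j. j \<in> J \<Longrightarrow> e j \<ge> 1"
    and "\<And>x. x > 0 \<Longrightarrow> 0 \<le> (\<Sum>j\<in>J. c j * x ^ e j)"
    and "z > 0" "(\<Sum>j\<in>J. c j * z ^ e j) \<noteq> 0"
  shows "(\<Sum>j\<in>J. c j * fact (e j) * zeta (e j + 1)) > 0"
proof -
  define P where "P x = (\<Sum>j\<in>J. c j * x ^ e j)" for x :: real
  define F where "F k = (\<Sum>j\<in>J. c j * fact (e j) * inverse ((1 + real k) ^ (e j + 1)))" for k
  have F_sums: "F sums (\<Sum>j\<in>J. c j * fact (e j) * zeta (e j + 1))"
    unfolding F_def using assms(2) by (intro sums_sum sums_mult sums_zeta) auto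
  have P_nonneg: "P t \<ge> 0" if "t \<ge> 0" for t
  proof (cases "t = 0")
    case True
    have "P 0 = 0" unfolding P_def using assms(2) by (intro sum.neutral) (force simp: power_0_left)
    then show ?thesis using True by simp
  qed (use that assms(3)[of t] in \<open>simp add: P_def\<close>)
  have F_integral: "((\<lambda>t. P (t / (1 + real k)) / exp t) has_integral ((1 + real k) * F k)) {0..}"
    for k
  proof -
    define L where "L = 1 + real k"
    have L: "L > 0" by (simp add: L_def)
    have "((\<lambda>t. \<Sum>j\<in>J. c j * ((t / L) ^ e j / exp t)) has_integral
        (\<Sum>j\<in>J. c j * (fact (e j) / L ^ e j))) {0..}"
      by (intro has_integral_sum assms(1) has_integral_mult_right has_integral_scaled_power_exp L)
    moreover have "(\<lambda>t. P (t / L) / exp t) = (\<lambda>t. \<Sum>j\<in>J. c j * ((t / L) ^ e j / exp t))"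
      unfolding P_def sum_divide_distrib by simp
    moreover have "c j * (fact (e j) / L ^ e j) = L * (c j * fact (e j) * inverse (L ^ (e j + 1)))"
      for j using L by (simp add: field_simps)
    then have "(\<Sum>j\<in>J. c j * (fact (e j) / L ^ e j)) = L * F k"
      unfolding F_def L_def[symmetric] sum_distrib_left by simp
    ultimately show ?thesis unfolding L_def by simp
  qed
  have F_nonneg: "F k \<ge> 0" for k
  proof -
    have "(1 + real k) * F k \<ge> 0"
      using P_nonneg by (intro has_integral_nonneg[OF F_integral]) simp
    then show ?thesis by (simp add: zero_le_mult_iff)
  qed
  have "F 0 > 0"
  proof -
    have "P z > 0" using assms(3)[OF assms(4)] assms(5) unfolding P_def by linarith
    moreover have "isCont (\<lambda>t. P (t / (1 + real 0)) / exp t) z"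
      unfolding P_def by (intro continuous_intros) auto
    ultimately have "(1 + real 0) * F 0 > 0"
      using P_nonneg by (intro has_integral_Ici_pos[OF F_integral _ _ assms(4)]) simp_all
    then show ?thesis by simp
  qed
  then have "suminf F > 0"
    using F_nonneg sums_summable[OF F_sums] by (intro suminf_pos2[of _ 0]) simp_all
  then show ?thesis using sums_unique[OF F_sums] by simp
qed

lemma sin_pi_times_nonzero:
  fixes z :: complex
  assumes "z \<notin> \<int>"
  shows "sin (of_real pi * z) \<noteq> 0"
proof
  assume "sin (of_real pi * z) = 0"
  then obtain n :: int where "of_real pi * z = of_real (of_int n * pi)"
    by (auto simp: sin_eq_0)
  then have "z = of_int n" by (simp add: field_simps)
  then show False using assms by simp
qed

text \<open>The logarithmic derivative of the reflection formula \<open>\<Gamma>(z) \<Gamma>(1 - z) sin (\<pi> z) = \<pi>\<close>.\<close>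
lemma pi_cot_eq_Digamma:
  fixes z :: complex
  assumes z: "z \<notin> \<int>"
  shows "of_real pi * cot (of_real pi * z) = Digamma (1 - z) - Digamma z"
proof -
  have "1 - z \<notin> \<int>"
  proof
    assume "1 - z \<in> \<int>"
    then have "1 - (1 - z) \<in> \<int>" by (intro Ints_diff) auto
    then show False using z by simp
  qed
  then have z0: "z \<notin> \<int>\<^sub>\<le>\<^sub>0" "1 - z \<notin> \<int>\<^sub>\<le>\<^sub>0" using z nonpos_Ints_subset_Ints by blast+
  have s0: "sin (of_real pi * z) \<noteq> 0" using sin_pi_times_nonzero[OF z] .
  define g where "g w = Gamma w * Gamma (1 - w) * sin (of_real pi * w)" for w :: complex
  define g' where "g' = Gamma z * Gamma (1 - z) * (Digamma z * sin (of_real pi * z)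
      - Digamma (1 - z) * sin (of_real pi * z) + of_real pi * cos (of_real pi * z))"
  have "(g has_field_derivative g') (at z)"
    unfolding g_def g'_def
    by (rule derivative_eq_intros refl has_field_derivative_Gamma z0 | simp)+ (simp add: algebra_simps)
  moreover have "(g has_field_derivative 0) (at z)"
  proof (rule has_field_derivative_transform_within_open[of "\<lambda>_. of_real pi" 0 z "- \<int>"])
    show "of_real pi = g w" if "w \<in> - \<int>" for w
      using that sin_pi_times_nonzero[of w] by (simp add: g_def Gamma_reflection_complex)
  qed (use z in auto)
  ultimately have "g' = 0" by (rule DERIV_unique)
  moreover have "Gamma z \<noteq> 0" "Gamma (1 - z) \<noteq> 0"
    using z0 by (auto simp: Gamma_eq_zero_iff)
  ultimately have "Digamma z * sin (of_real pi * z) - Digamma (1 - z) * sin (of_real pi * z)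
      + of_real pi * cos (of_real pi * z) = 0"
    by (simp add: g'_def)
  then show ?thesis using s0 by (simp add: cot_def field_simps)
qed

lemma exp_gen_fun_eq_Digamma:
  fixes z :: complex
  assumes z: "z \<notin> \<int>"
  defines "c \<equiv> 2 * of_real pi * \<i>"
  shows "c * z * exp (c * z) / (exp (c * z) - 1) =
         1 + c / 2 * z + z * (Digamma (1 - z) - Digamma (1 + z))"
proof -
  have z0: "z \<noteq> 0" using z by auto
  define u where "u = exp (\<i> * (of_real pi * z))"
  have u0: "u \<noteq> 0" unfolding u_def by simp
  have eu: "exp (c * z) = u ^ 2" unfolding u_def c_def
    by (subst exp_double[symmetric]) (simp add: mult_ac)
  have sinu: "sin (of_real pi * z) = (u - inverse u) / (2 * \<i>)"
    unfolding u_def by (simp add: sin_exp_eq exp_minus)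
  have cosu: "cos (of_real pi * z) = (u + inverse u) / 2"
    unfolding u_def by (simp add: cos_exp_eq exp_minus)
  have "u ^ 2 - 1 \<noteq> 0"
  proof
    assume "u ^ 2 - 1 = 0"
    then have "u - inverse u = 0" using u0 by (simp add: field_simps power2_eq_square)
    then show False using sin_pi_times_nonzero[OF z] sinu by simp
  qed
  have "1 + c / 2 * z + z * (Digamma (1 - z) - Digamma (1 + z))
      = c / 2 * z + z * (Digamma (1 - z) - Digamma z)"
    using Digamma_plus1[OF z0] z0 by (simp add: add.commute field_simps)
  also have "\<dots> = c / 2 * z + z * (of_real pi * cot (of_real pi * z))"
    using pi_cot_eq_Digamma[OF z] by simp
  also have "\<dots> = c * z * exp (c * z) / (exp (c * z) - 1)"
    unfolding cot_def sinu cosu eu using u0 \<open>u ^ 2 - 1 \<noteq> 0\<close>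
    by (simp add: c_def field_simps power2_eq_square)
  finally show ?thesis by simp
qed

definition fps_scale_of_real :: "complex \<Rightarrow> real fps \<Rightarrow> complex fps" where
  "fps_scale_of_real c F = Abs_fps (\<lambda>n. c ^ n * of_real (F $ n))"

lemma fps_scale_of_real_nth [simp]: "fps_scale_of_real c F $ n = c ^ n * of_real (F $ n)"
  by (simp add: fps_scale_of_real_def)

lemma fps_scale_of_real_mult:
  "fps_scale_of_real c (F * G) = fps_scale_of_real c F * fps_scale_of_real c G"
proof (rule fps_ext)
  fix n
  have "fps_scale_of_real c (F * G) $ n =
      (\<Sum>i = 0..n. c ^ n * (of_real (F $ i) * of_real (G $ (n - i))))"
    by (simp add: fps_mult_nth sum_distrib_left)
  also have "\<dots> = (\<Sum>i = 0..n. (c ^ i * of_real (F $ i)) * (c ^ (n - i) * of_real (G $ (n - i))))"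
  proof (rule sum.cong)
    fix i assume "i \<in> {0..n}"
    then have "c ^ n = c ^ i * c ^ (n - i)" by (simp add: power_add[symmetric])
    then show "c ^ n * (of_real (F $ i) * of_real (G $ (n - i))) =
        (c ^ i * of_real (F $ i)) * (c ^ (n - i) * of_real (G $ (n - i)))"
      by (simp add: mult_ac)
  qed simp
  also have "\<dots> = (fps_scale_of_real c F * fps_scale_of_real c G) $ n" by (simp add: fps_mult_nth)
  finally show "fps_scale_of_real c (F * G) $ n = (fps_scale_of_real c F * fps_scale_of_real c G) $ n" .
qed

lemma fps_scale_of_real_diff:
  "fps_scale_of_real c (F - G) = fps_scale_of_real c F - fps_scale_of_real c G"
  by (rule fps_ext) (simp add: algebra_simps)

lemma fps_scale_of_real_one: "fps_scale_of_real c 1 = 1"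
  by (rule fps_ext) (simp add: fps_one_nth)

lemma fps_scale_of_real_X: "fps_scale_of_real c fps_X = fps_const c * fps_X"
  by (rule fps_ext) (simp add: fps_X_def)

lemma fps_scale_of_real_exp: "fps_scale_of_real c (fps_exp 1) = fps_exp c"
  by (rule fps_ext) (simp add: fps_exp_def)

definition bernoulli_fps :: "real fps" where
  "bernoulli_fps = fps_X * fps_exp 1 / (fps_exp 1 - 1)"

lemma subdegree_fps_exp_minus_1:
  "(c :: 'a :: field_char_0) \<noteq> 0 \<Longrightarrow> subdegree (fps_exp c - 1) = 1"
  by (rule subdegreeI) (auto simp: fps_exp_def fps_one_nth)

lemma fps_scale_of_real_bernoulli_fps:
  assumes "c \<noteq> 0"
  shows "fps_scale_of_real c bernoulli_fps = fps_const c * fps_X * fps_exp c / (fps_exp c - 1)"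
proof -
  have "subdegree (fps_X * fps_exp (1::real)) = 1"
    by (rule subdegreeI) (auto simp: fps_exp_def)
  then have "bernoulli_fps * (fps_exp 1 - 1) = fps_X * fps_exp 1"
    unfolding bernoulli_fps_def using subdegree_fps_exp_minus_1[of "1::real"]
    by (intro fps_times_divide_eq) (simp_all add: fps_exp_eq_1_iff)
  then have "fps_scale_of_real c (bernoulli_fps * (fps_exp 1 - 1)) =
      fps_scale_of_real c (fps_X * fps_exp 1)"
    by simp
  then have "fps_const c * fps_X * fps_exp c = fps_scale_of_real c bernoulli_fps * (fps_exp c - 1)"
    by (simp add: fps_scale_of_real_mult fps_scale_of_real_diff fps_scale_of_real_one
        fps_scale_of_real_X fps_scale_of_real_exp)
  moreover have "fps_exp c - 1 \<noteq> 0" using assms by (simp add: fps_exp_eq_1_iff)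
  ultimately show ?thesis by simp
qed

lemma has_fps_expansion_exp_gen_fun:
  fixes c :: complex
  assumes "c \<noteq> 0"
  shows "(\<lambda>z. if z = 0 then 1 else c * z * exp (c * z) / (exp (c * z) - 1))
           has_fps_expansion (fps_const c * fps_X * fps_exp c / (fps_exp c - 1))"
proof (rule has_fps_expansion_divide)
  have "subdegree (fps_const c * fps_X * fps_exp c) = 1"
    using assms by (intro subdegreeI) (auto simp: fps_exp_def)
  then show "subdegree (fps_exp c - 1) \<le> subdegree (fps_const c * fps_X * fps_exp c)"
    using subdegree_fps_exp_minus_1[OF assms] by simp
  show "1 = (fps_const c * fps_X * fps_exp c) $ subdegree (fps_exp c - 1) /
        (fps_exp c - 1) $ subdegree (fps_exp c - 1)"
    unfolding subdegree_fps_exp_minus_1[OF assms] using assms by (simp add: fps_exp_def)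
qed (use assms in \<open>auto intro!: fps_expansion_intros simp: fps_exp_eq_1_iff\<close>)

lemma higher_deriv_Polygamma_linear:
  fixes a b z :: complex
  assumes "a + b * z \<notin> \<int>\<^sub>\<le>\<^sub>0"
  shows "(deriv ^^ m) (\<lambda>w. Polygamma k (a + b * w)) z = b ^ m * Polygamma (k + m) (a + b * z)"
  using assms
proof (induction m arbitrary: z)
  case (Suc m)
  have "closed ((\<lambda>w. a + b * w) -` \<int>\<^sub>\<le>\<^sub>0)"
    by (intro continuous_closed_vimage closed_nonpos_Ints continuous_intros)
  then have "open {w. a + b * w \<notin> \<int>\<^sub>\<le>\<^sub>0}"
    using open_Collect_neg[of "\<lambda>w. a + b * w \<in> \<int>\<^sub>\<le>\<^sub>0"] by (simp add: vimage_def)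
  then have "eventually (\<lambda>w. (deriv ^^ m) (\<lambda>w. Polygamma k (a + b * w)) w =
      b ^ m * Polygamma (k + m) (a + b * w)) (nhds z)"
    using Suc by (auto intro: eventually_nhds_in_open[THEN eventually_mono])
  then have "(deriv ^^ Suc m) (\<lambda>w. Polygamma k (a + b * w)) z =
      deriv (\<lambda>w. b ^ m * Polygamma (k + m) (a + b * w)) z"
    by (simp add: deriv_cong_ev)
  also have "\<dots> = b ^ Suc m * Polygamma (k + Suc m) (a + b * z)"
    by (rule DERIV_imp_deriv) (rule derivative_eq_intros refl Suc.prems | simp)+
  finally show ?case .
qed simp

lemma Polygamma_one_eq_zeta:
  "m \<ge> 1 \<Longrightarrow> Polygamma m (1::complex) = of_real ((-1) ^ Suc m * fact m * zeta (Suc m))"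
  using Polygamma_of_real[of "1::real" m] by (simp add: Polygamma_def zeta_def)

text \<open>Coefficient comparison in \<open>c z e\<^bsup>cz\<^esup> / (e\<^bsup>cz\<^esup> - 1) = 1 + c z / 2 + z (\<psi>(1 - z) - \<psi>(1 + z))\<close>
  with \<open>c = 2 \<pi> i\<close>, whose left side generates \<open>c\<^sup>n B\<^sub>n(1) / n!\<close>.\<close>
lemma bernpoly_one_eq_zeta:
  assumes n: "n \<ge> 2"
  shows "(2 * of_real pi * \<i>) ^ n * of_real (bernpoly n 1) =
         - of_real ((1 + (-1) ^ n) * fact n * zeta n)"
proof -
  define c where "c = 2 * of_real pi * \<i>"
  have c0: "c \<noteq> 0" unfolding c_def by simp
  define D where "D z = Digamma (1 - z) - Digamma (1 + z)" for z :: complex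
  have ball_nonpos: "1 + s * z \<notin> \<int>\<^sub>\<le>\<^sub>0" if "z \<in> ball 0 1" "norm s = 1" for s z :: complex
  proof
    assume "1 + s * z \<in> \<int>\<^sub>\<le>\<^sub>0"
    then obtain k :: int where "1 + s * z = of_int k" "k \<le> 0" by (elim nonpos_Ints_cases)
    then have "Re (1 + s * z) \<le> 0" by (simp only: complex_Re_of_int)
    moreover have "\<bar>Re (s * z)\<bar> < 1"
      using that abs_Re_le_cmod[of "s * z"] by (simp add: norm_mult)
    ultimately show False by simp
  qed
  have D_holo: "(\<lambda>z. Digamma (1 - z)) holomorphic_on ball 0 1"
      "(\<lambda>z. Digamma (1 + z)) holomorphic_on ball 0 1"
    using ball_nonpos[of _ 1] ball_nonpos[of _ "-1"]
    by (auto intro!: analytic_imp_holomorphic analytic_on_Polygamma' analytic_intros)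
  then have "D holomorphic_on ball 0 1"
    unfolding D_def by (intro holomorphic_on_diff)
  then have D_exp: "D has_fps_expansion fps_expansion D 0"
    by (intro has_fps_expansion_fps_expansion) auto
  define f where "f z = (if z = 0 then 1 else c * z * exp (c * z) / (exp (c * z) - 1))" for z
  have "eventually (\<lambda>z. z \<in> ball 0 1) (nhds (0::complex))"
    by (intro eventually_nhds_in_open) auto
  then have "eventually (\<lambda>z. 1 + c / 2 * z + z * D z = f z) (nhds 0)"
  proof eventually_elim
    case (elim z)
    have "z \<notin> \<int>" if "z \<noteq> 0"
    proof
      assume "z \<in> \<int>"
      then obtain k :: int where k: "z = of_int k" by (elim Ints_cases)
      then have "norm z = \<bar>real_of_int k\<bar>" by (simp only: norm_of_int)
      then have "k = 0" using elim by simp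
      then show False using k that by simp
    qed
    then show ?case unfolding f_def D_def c_def using exp_gen_fun_eq_Digamma by auto
  qed
  moreover have "(\<lambda>z. 1 + c / 2 * z + z * D z)
      has_fps_expansion (1 + fps_const (c / 2) * fps_X + fps_X * fps_expansion D 0)"
    by (intro fps_expansion_intros D_exp)
  ultimately have "f has_fps_expansion (1 + fps_const (c / 2) * fps_X + fps_X * fps_expansion D 0)"
    by (auto simp: has_fps_expansion_def elim: eventually_elim2)
  moreover have "f has_fps_expansion fps_scale_of_real c bernoulli_fps"
    unfolding f_def fps_scale_of_real_bernoulli_fps[OF c0] using has_fps_expansion_exp_gen_fun[OF c0] .
  ultimately have "fps_scale_of_real c bernoulli_fps =
      1 + fps_const (c / 2) * fps_X + fps_X * fps_expansion D 0"
    by (rule fps_expansion_unique_complex[rotated])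
  then have "c ^ n * of_real (bernoulli_fps $ n) =
      (1 + fps_const (c / 2) * fps_X + fps_X * fps_expansion D 0) $ n"
    by (simp flip: fps_scale_of_real_nth)
  also have "\<dots> = fps_expansion D 0 $ (n - 1)"
    using n by (simp add: fps_X_mult_nth fps_one_nth)
  also have "\<dots> = (deriv ^^ (n - 1)) D 0 / fact (n - 1)"
    by (simp add: fps_expansion_def)
  also have "(deriv ^^ (n - 1)) D 0 = (-1) ^ (n - 1) * Polygamma (n - 1) 1 - Polygamma (n - 1) 1"
    using higher_deriv_Polygamma_linear[of 1 "-1" 0 "n - 1" 0]
      higher_deriv_Polygamma_linear[of 1 1 0 "n - 1" 0] D_holo
    unfolding D_def by (subst higher_deriv_diff) auto
  also obtain m where m: "n = Suc m" "m \<ge> 1" using n by (cases n) auto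
  then have "((-1) ^ (n - 1) * Polygamma (n - 1) 1 - Polygamma (n - 1) 1) / fact (n - 1) =
      (of_real (((-1) ^ m - 1) * ((-1) ^ Suc m * fact m * zeta n) / fact m) :: complex)"
    using Polygamma_one_eq_zeta[OF m(2)] by (simp add: field_simps)
  also have "((-1) ^ m - 1) * ((-1) ^ Suc m * fact m * zeta n) / fact m = - (1 + (-1) ^ n) * zeta n"
    using m(1) by (cases "even m") simp_all
  finally have coeff_n: "c ^ n * of_real (bernoulli_fps $ n) = of_real (- (1 + (-1) ^ n) * zeta n)" .
  have "c ^ n * of_real (bernpoly n 1) = fact n * (c ^ n * of_real (bernoulli_fps $ n))"
    by (simp add: bernpoly_def bernoulli_fps_def mult_ac)
  also have "\<dots> = fact n * of_real (- (1 + (-1) ^ n) * zeta n)"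
    by (simp only: coeff_n)
  finally show ?thesis unfolding c_def by (simp add: algebra_simps)
qed

lemma bernpoly_one_odd: "n \<ge> 2 \<Longrightarrow> odd n \<Longrightarrow> bernpoly n 1 = 0"
  using bernpoly_one_eq_zeta[of n] by simp

lemma bernpoly_one_even:
  assumes "n \<ge> 2" "even n"
  shows "bernpoly n 1 = - 2 * (-1) ^ (n div 2) * fact n * zeta n / (2 * pi) ^ n"
proof -
  obtain q where q: "n = 2 * q" using assms(2) by blast
  have "(2 * of_real pi * \<i>) ^ n = of_real ((2 * pi) ^ n) * (\<i> ^ 2) ^ q"
    unfolding q power_mult[symmetric] by (simp add: power_mult_distrib)
  then have "(2 * of_real pi * \<i>) ^ n = (of_real ((2 * pi) ^ n * (-1) ^ q) :: complex)"
    by simp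
  then have "(2 * pi) ^ n * (-1) ^ q * bernpoly n 1 = - 2 * fact n * zeta n"
    using bernpoly_one_eq_zeta[OF assms(1)] assms(2) by (simp flip: of_real_mult of_real_eq_iff)
  then show ?thesis
    unfolding q by (cases "even q") (simp_all add: field_simps)
qed

lemma poly_eq_sum_support:
  fixes p :: "'a::comm_semiring_1 poly"
  assumes "finite E" "\<And>i. coeff p i \<noteq> 0 \<Longrightarrow> i \<in> E"
  shows "poly p x = (\<Sum>i\<in>E. coeff p i * x ^ i)"
proof -
  have not_in_E: "coeff p i = 0" if "i \<notin> E" for i
    using assms(2) that by blast
  have "poly p x = (\<Sum>i\<in>E \<union> {..degree p}. coeff p i * x ^ i)"
    unfolding poly_altdef using assms(1) by (intro sum.mono_neutral_left) (auto simp: coeff_eq_0)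
  also have "\<dots> = (\<Sum>i\<in>E. coeff p i * x ^ i)"
    using assms by (intro sum.mono_neutral_right) (auto simp: not_in_E)
  finally show ?thesis .
qed

lemma exists_pos_not_root:
  fixes p :: "real poly"
  assumes "p \<noteq> 0"
  shows "\<exists>x>0. poly p x \<noteq> 0"
  using infinite_Ioi[of 0] finite_subset[OF _ poly_roots_finite[OF assms]] by blast

text \<open>Pairing the relations with the coefficients of a sign partner \<open>H\<close> of
  \<open>G = \<Sum>\<^sub>l u\<^sub>l x\<^sup>l\<close> expresses \<open>0\<close> as the positive moment of \<open>H G\<close>.\<close>
lemma zeta_moment_relations_trivial:
  fixes I :: "nat set" and a :: "nat \<Rightarrow> nat" and u :: "nat \<Rightarrow> real"
  assumes I: "finite I" and a: "inj_on a I" "\<And>i. i \<in> I \<Longrightarrow> a i \<ge> 1"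
    and rel: "\<And>i. i \<in> I \<Longrightarrow> (\<Sum>l\<in>I. u l * (fact (a i + l) * zeta (a i + l + 1))) = 0"
    and "k \<in> I"
  shows "u k = 0"
proof (rule ccontr)
  assume "u k \<noteq> 0"
  define G where "G = (\<Sum>l\<in>I. monom (u l) l)"
  have coeff_G: "coeff G l = (if l \<in> I then u l else 0)" for l
    unfolding G_def by (simp add: coeff_sum coeff_monom I)
  have "G \<noteq> 0" using coeff_G[of k] \<open>u k \<noteq> 0\<close> \<open>k \<in> I\<close> by auto
  moreover have "nonzero_coeffs G \<le> card (a ` I)"
    unfolding nonzero_coeffs_def card_image[OF a(1)] using coeff_G I
    by (intro card_mono) (auto split: if_splits)
  ultimately obtain H where H: "H \<noteq> 0" "\<And>k. coeff H k \<noteq> 0 \<Longrightarrow> k \<in> a ` I"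
      "\<And>x. x > 0 \<Longrightarrow> 0 \<le> poly (H * G) x"
    using exists_sparse_sign_partner[of G "a ` I"] I by blast
  define c where "c j = coeff H (a (fst j)) * u (snd j)" for j
  define e where "e j = a (fst j) + snd j" for j
  have poly_HG: "poly (H * G) x = (\<Sum>j\<in>I \<times> I. c j * x ^ e j)" for x
  proof -
    have "poly H x = (\<Sum>i\<in>I. coeff H (a i) * x ^ a i)"
      using poly_eq_sum_support[of "a ` I" H x] H(2) I by (simp add: sum.reindex[OF a(1)])
    moreover have "poly G x = (\<Sum>l\<in>I. u l * x ^ l)"
      by (simp add: G_def poly_sum poly_monom)
    ultimately have "poly (H * G) x = (\<Sum>i\<in>I. \<Sum>l\<in>I. coeff H (a i) * x ^ a i * (u l * x ^ l))"
      by (simp add: sum_product)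
    then show ?thesis
      by (simp add: sum.cartesian_product case_prod_unfold c_def e_def power_add mult_ac)
  qed
  obtain x0 where x0: "x0 > 0" "poly (H * G) x0 \<noteq> 0"
    using exists_pos_not_root[of "H * G"] H(1) \<open>G \<noteq> 0\<close> by auto
  have e_ge: "e j \<ge> 1" if "j \<in> I \<times> I" for j
    using that a(2)[of "fst j"] by (auto simp: e_def mem_Times_iff)
  have nonneg: "0 \<le> (\<Sum>j\<in>I \<times> I. c j * x ^ e j)" if "x > 0" for x
    using H(3)[OF that] unfolding poly_HG .
  have "(\<Sum>j\<in>I \<times> I. c j * x0 ^ e j) \<noteq> 0"
    using x0(2) unfolding poly_HG .
  from zeta_moments_pos[where J = "I \<times> I" and e = e and c = c and z = x0, OF _ e_ge nonneg x0(1) this]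
  have "(\<Sum>j\<in>I \<times> I. c j * fact (e j) * zeta (e j + 1)) > 0"
    using I by simp
  also have "(\<Sum>j\<in>I \<times> I. c j * fact (e j) * zeta (e j + 1)) =
      (\<Sum>i\<in>I. \<Sum>l\<in>I. c (i, l) * fact (e (i, l)) * zeta (e (i, l) + 1))"
    by (simp add: sum.cartesian_product)
  also have "\<dots> = (\<Sum>i\<in>I. coeff H (a i) * (\<Sum>l\<in>I. u l * (fact (a i + l) * zeta (a i + l + 1))))"
    by (simp add: c_def e_def sum_distrib_left mult.assoc)
  also have "\<dots> = 0" using rel by (intro sum.neutral) simp
  finally show False by simp
qed

text \<open>For \<open>m \<equiv> l \<equiv> l\<^sub>0 (mod 2)\<close> the entry \<open>B\<^sub>m\<^sub>+\<^sub>l(1) / (m + l)\<close> splits into a factor depending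
  only on \<open>m\<close>, one depending only on \<open>l\<close>, and \<open>(m + l - 1)! \<zeta>(m + l)\<close>.\<close>
lemma bernpoly_one_div_eq_zeta:
  assumes "m \<ge> 2" "even (m + l0)" "even (l + l0)"
  shows "bernpoly (m + l) 1 / real (m + l) =
    (- 2 * (-1) ^ ((m + l0) div 2) * (-1) ^ l0 / (2 * pi) ^ m) *
    ((-1) ^ ((l + l0) div 2) / (2 * pi) ^ l * (fact (m + l - 1) * zeta (m + l)))"
proof -
  obtain a where a: "m + l0 = 2 * a" using assms(2) by (elim evenE)
  obtain b where b: "l + l0 = 2 * b" using assms(3) by (elim evenE)
  note ab = a b
  then have ml: "m + l = 2 * (a + b - l0)" and idx: "a + b - l0 + 2 * l0 = a + l0 + b"
    by arith+
  have "(-1::real) ^ ((m + l) div 2) = (-1) ^ (a + b - l0 + 2 * l0)"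
    unfolding ml by (simp add: power_add power_mult)
  also have "\<dots> = (-1) ^ ((m + l0) div 2) * (-1) ^ l0 * (-1) ^ ((l + l0) div 2)"
    unfolding idx using ab by (simp add: power_add)
  finally have sign: "(-1::real) ^ ((m + l) div 2) =
      (-1) ^ ((m + l0) div 2) * (-1) ^ l0 * (-1) ^ ((l + l0) div 2)" .
  have "even (m + l)" using ml by simp
  moreover have "fact (m + l) = real (m + l) * fact (m + l - 1)"
    using assms(1) fact_reduce[of "m + l"] by simp
  ultimately have "bernpoly (m + l) 1 = real (m + l) *
      (- 2 * (-1) ^ ((m + l) div 2) * fact (m + l - 1) * zeta (m + l) / (2 * pi) ^ (m + l))"
    using bernpoly_one_even[of "m + l"] assms(1) by (simp add: mult_ac)
  then have "bernpoly (m + l) 1 / real (m + l) =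
      - 2 * (-1) ^ ((m + l) div 2) * fact (m + l - 1) * zeta (m + l) / (2 * pi) ^ (m + l)"
    using assms(1) by simp
  then show ?thesis
    unfolding sign power_add by (simp add: divide_inverse inverse_mult_distrib mult_ac)
qed

text \<open>Entries with \<open>A\<^sub>i + l\<close> odd vanish, so a kernel vector can be cut down to the columns of
  one parity, where the row relations become moment relations for \<open>\<zeta>\<close>.\<close>
lemma det_bernpoly_one_matrix_nonzero:
  fixes A :: "nat \<Rightarrow> nat"
  assumes inj: "inj_on A {..<r}" and A_ge: "\<And>i. i < r \<Longrightarrow> A i \<ge> 2"
    and parity: "\<And>i. i < r \<Longrightarrow> even (A i + i)"
  shows "det (mat r r (\<lambda>(i, l). bernpoly (A i + l) 1 / real (A i + l))) \<noteq> 0"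
proof
  define M where "M = mat r r (\<lambda>(i, l). bernpoly (A i + l) 1 / real (A i + l))"
  assume "det (mat r r (\<lambda>(i, l). bernpoly (A i + l) 1 / real (A i + l))) = 0"
  then have "det M = 0" unfolding M_def .
  moreover have M: "M \<in> carrier_mat r r" unfolding M_def by simp
  ultimately obtain v where v: "v \<in> carrier_vec r" "v \<noteq> 0\<^sub>v r" "M *\<^sub>v v = 0\<^sub>v r"
    using det_0_iff_vec_prod_zero_field by blast
  have "\<exists>l<r. v $ l \<noteq> 0"
  proof (rule ccontr)
    assume "\<not> (\<exists>l<r. v $ l \<noteq> 0)"
    then have "v = 0\<^sub>v r" using v(1) by (intro eq_vecI) auto
    then show False using v(2) by simp
  qed
  then obtain l0 where l0: "l0 < r" "v $ l0 \<noteq> 0" by blast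
  define I where "I = {l. l < r \<and> even (l + l0)}"
  define u where "u l = (-1) ^ ((l + l0) div 2) / (2 * pi) ^ l * v $ l" for l
  have rel: "(\<Sum>l\<in>I. u l * (fact (A i - 1 + l) * zeta (A i - 1 + l + 1))) = 0" if "i \<in> I" for i
  proof -
    have i: "i < r" "A i \<ge> 2" "even (A i + l0)"
      using that parity[of i] A_ge[of i] unfolding I_def by (auto simp: even_add)
    define F where "F = - 2 * (-1) ^ ((A i + l0) div 2) * (-1) ^ l0 / (2 * pi) ^ A i"
    have "0 = (M *\<^sub>v v) $ i" using v(3) i(1) by simp
    also have "\<dots> = (\<Sum>l<r. M $$ (i, l) * v $ l)"
      using i(1) v(1) by (simp add: M_def scalar_prod_def lessThan_atLeast0)
    also have "\<dots> = (\<Sum>l\<in>I. M $$ (i, l) * v $ l)"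
    proof (rule sum.mono_neutral_right)
      show "\<forall>l\<in>{..<r} - I. M $$ (i, l) * v $ l = 0"
      proof
        fix l assume "l \<in> {..<r} - I"
        then have "l < r" "odd (A i + l)" using i(3) unfolding I_def by (auto simp: even_add)
        then show "M $$ (i, l) * v $ l = 0"
          using i bernpoly_one_odd[of "A i + l"] by (simp add: M_def)
      qed
    qed (auto simp: I_def)
    also have "\<dots> = F * (\<Sum>l\<in>I. u l * (fact (A i - 1 + l) * zeta (A i - 1 + l + 1)))"
      unfolding sum_distrib_left
    proof (rule sum.cong)
      fix l assume "l \<in> I"
      then have "l < r" "even (l + l0)" by (auto simp: I_def)
      moreover have "A i - 1 + l = A i + l - 1" "A i - 1 + l + 1 = A i + l" using i(2) by auto
      ultimately show "M $$ (i, l) * v $ l = F * (u l * (fact (A i - 1 + l) * zeta (A i - 1 + l + 1)))"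
        using i bernpoly_one_div_eq_zeta[of "A i" l0 l] by (simp add: M_def F_def u_def mult_ac)
    qed simp
    finally show ?thesis by (simp add: F_def)
  qed
  have I: "finite I" "I \<subseteq> {..<r}" "l0 \<in> I" using l0(1) by (auto simp: I_def)
  have A_pred_ge: "A i - 1 \<ge> 1" if "i \<in> I" for i
    using that I(2) A_ge by force
  have "inj_on (\<lambda>i. A i - 1) I"
  proof (rule inj_onI)
    fix i j assume ij: "i \<in> I" "j \<in> I" "A i - 1 = A j - 1"
    then have "A i = A j" using A_pred_ge[OF ij(1)] A_pred_ge[OF ij(2)] by arith
    then show "i = j" using inj_onD[OF inj] ij(1,2) I(2) by blast
  qed
  then have "u l0 = 0"
    by (rule zeta_moment_relations_trivial[where u = u and k = l0, OF I(1)])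
      (blast intro: A_pred_ge rel I(3))+
  then show False using l0(2) by (simp add: u_def)
qed

theorem proposition3p1:
  fixes r :: nat and p :: "nat \<Rightarrow> nat"
  assumes "r \<ge> 1"
    and "\<And>j. 1 \<le> j \<Longrightarrow> j \<le> r \<Longrightarrow> prime (p j)"
    and "\<And>j. 1 \<le> j \<Longrightarrow> j < r \<Longrightarrow> p j < p (j + 1)"
    and "p 1 > 2"
    and "\<And>j. 1 \<le> j \<Longrightarrow> j \<le> r - 1 \<Longrightarrow> p (j + 1) - p j > r"
  shows "det (mat r r (\<lambda>(i, l).
            let j = i + 1; k = l + 1; \<alpha> = p j - j; n = \<alpha> + k - 1
            in bernpoly n 1 / real n)) \<noteq> 0"
proof -
  define A where "A i = p (i + 1) - (i + 1)" for i
  have gap: "p (i + 2) \<ge> p (i + 1) + 2" if "i + 1 < r" for i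
  proof -
    have "p (i + 2) - p (i + 1) > r" using assms(5)[of "i + 1"] that by simp
    then show ?thesis using assms(1) by linarith
  qed
  have p_ge: "p (i + 1) \<ge> 2 * i + 3" if "i < r" for i
    using that
  proof (induction i)
    case (Suc i)
    then show ?case using gap[of i] by simp
  qed (use assms(4) in simp)
  have A_ge: "A i \<ge> 2" if "i < r" for i
    using p_ge[OF that] by (simp add: A_def)
  have "odd (p (i + 1))" if "i < r" for i
    using assms(2)[of "i + 1"] p_ge[OF that] that by (intro prime_odd_nat) auto
  moreover have "A i + i + 1 = p (i + 1)" if "i < r" for i
    using p_ge[OF that] by (simp add: A_def)
  ultimately have "odd (A i + i + 1)" if "i < r" for i
    using that by simp
  then have parity: "even (A i + i)" if "i < r" for i
    using that by simp
  have step: "A i < A (Suc i)" if "i \<in> {..<r - 1}" for i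
  proof -
    have "i + 1 < r" using that by auto
    then have "p (i + 2) \<ge> p (i + 1) + 2" "p (i + 1) \<ge> 2 * i + 3" using gap p_ge by simp_all
    moreover have "A (Suc i) = p (i + 2) - (i + 2)" "A i = p (i + 1) - (i + 1)"
      by (simp_all add: A_def)
    ultimately show ?thesis by linarith
  qed
  have "strict_mono_on {..<r} A"
  proof (rule strict_mono_onI)
    fix i j :: nat assume "i \<in> {..<r}" "j \<in> {..<r}" "i < j"
    then show "A i < A j"
      by (intro lift_Suc_mono_less_ivl[of "{..<r - 1}" A i j, OF step]) auto
  qed
  then have "det (mat r r (\<lambda>(i, l). bernpoly (A i + l) 1 / real (A i + l))) \<noteq> 0"
    using A_ge parity by (intro det_bernpoly_one_matrix_nonzero strict_mono_on_imp_inj_on)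
  then show ?thesis by (simp add: A_def Let_def)
qed

end
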